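(* Let $G$ be a finite group and $\omega$ a normalized $3$-cocycle on $G$ with values in $\mathbb C^\times$. For $x\in G$ let $V_x$ be the one-dimensional simple $H(G,\omega)$-module with character $\chi_x$ (evaluation at $x$, i.e. $\chi_x(e(g))=\delta_{g,x}$). Then for every positive integer $n$, $$\nu_n(V_x)=\delta_{x^n,1}\prod_{r=1}^{n-1}\omega(x,x^r,x).$$ In particular $\nu_n(V_x)=0$ if $n$ is not a multiple of the order $o(x)$ of $x$; $\nu_{o(x)}(V_x)$ is a root of unity whose order equals the order of the cohomology class $\mathrm{res}_{\langle x\rangle}[\omega]\in H^3(\langle x\rangle,\mathbb C^\times)$; and $\nu_{s\cdot o(x)}(V_x)=\nu_{o(x)}(V_x)^s$ for all $s\in\mathbb N$.
   Context: $H(G,\omega)=(\mathbb C[G]^*,\Delta,\epsilon,\phi,\alpha,\beta,S)$ is the quasi-Hopf algebra whose algebra, comultiplication, counit and antipode are those of the commutative Hopf algebra $\mathbb C[G]^*$ of functions on $G$ (with basis $\{e(g)\}_{g\in G}$ dual to $G$, $e(g)e(h)=\delta_{g,h}e(g)$, $\Delta(e(g))=\sum_{ab=g}e(a)\otimes e(b)$, $\epsilon(e(g))=\delta_{g,1}$, $S(e(g))=e(g^{-1})$), and $\phi=\sum_{a,b,c\in G}\omega(a,b,c)e(a)\otimes e(b)\otimes e(c)$, $\alpha=1$, $\beta=\sum_a\omega(a,a^{-1},a)^{-1}e(a)$. For a finite-dimensional module $W$ over a semisimple quasi-Hopf algebra $A=(A,\Delta,\epsilon,\phi,\alpha,\beta,S)$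 over $\mathbb C$, $\nu_n(W)$ is the $n$-th Frobenius–Schur indicator defined in the category $\mathcal C(A)$ of finite-dimensional $A$-modules (tensor via $\Delta$, unit $I=\mathbb C$, associativity $\Phi$ = action of $\phi$, left dual with $\mathrm{ev}(f\otimes w)=f(\alpha w)$, $\mathrm{db}(1)=\sum_i\beta w_i\otimes w^i$, action on $W^\vee$ via $S$) with pivotal structure $j$ the unique monoidal natural isomorphism $\mathrm{Id}\to(-)^{\vee\vee}$ with $\mathrm{ev}\circ(j_W\otimes\mathrm{id})\circ\mathrm{db}=\dim W$: $\nu_n(W)=\mathrm{Tr}(E_W^{(n)})$, where $E_W^{(n)}=\mathrm{Hom}(I,\Phi^{(n)})\circ A^{-1}\circ T\circ A$ on $\mathrm{Hom}(I,W^{\otimes n})$ (rightmost bracketing), $A(f)=(\mathrm{ev}\otimes\mathrm{id})\Phi^{-1}(\mathrm{id}_{W^\vee}\otimes f)$ for $f\in\mathrm{Hom}(I,W\otimes W^{\otimes(n-1)})$, $T(g)=j_W^{-1}\circ g^\vee$, $\Phi^{(1)}=\mathrm{id}$, $\Phi^{(n+1)}=(\mathrm{id}\otimes\Phi^{(n)})\circ\Phi$. *)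

theory Defs
  imports "HOL-Algebra.Multiplicative_Group"
begin

(* A module over the commutative semisimple algebra C[G]^* is the same as a
   G-graded vector space; we represent a module (up to isomorphism) by a
   finite homogeneous basis (a set of abstract indices) together with the
   degree of each basis vector: e(g) acts on a basis vector of degree h by
   delta_{g,h}.  Linear maps are matrices  tgt-index => src-index => complex.
   ------------------------------------------------------------------------ *)

datatype idx = Leaf nat | Unit | Pair idx idx | Dual idx

type_synonym 'g obj = "idx set \<times> (idx \<Rightarrow> 'g)"
type_synonym mat = "idx \<Rightarrow> idx \<Rightarrow> complex"

definition bas :: "'g obj \<Rightarrow> idx set" where "bas X = fst X"
definition dg :: "'g obj \<Rightarrow> idx \<Rightarrow> 'g" where "dg X = snd X"

text \<open>Unit object I = C (trivial module via the counit).\<close>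
definition unito :: "('g,'b) monoid_scheme \<Rightarrow> 'g obj" where
  "unito G = ({Unit}, \<lambda>_. \<one>\<^bsub>G\<^esub>)"

text \<open>Tensor product of modules via Delta(e(g)) = sum_{ab=g} e(a) (x) e(b).\<close>
definition tens :: "('g,'b) monoid_scheme \<Rightarrow> 'g obj \<Rightarrow> 'g obj \<Rightarrow> 'g obj" where
  "tens G X Y = ({Pair a b | a b. a \<in> bas X \<and> b \<in> bas Y},
     (\<lambda>i. case i of Pair a b \<Rightarrow> dg X a \<otimes>\<^bsub>G\<^esub> dg Y b | _ \<Rightarrow> \<one>\<^bsub>G\<^esub>))"

text \<open>Left dual module, action via the antipode S(e(g)) = e(g^-1):
  the dual basis vector of a basis vector of degree g has degree g^-1.\<close>
definition dualo :: "('g,'b) monoid_scheme \<Rightarrow> 'g obj \<Rightarrow> 'g obj" where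
  "dualo G X = (Dual ` bas X,
     (\<lambda>i. case i of Dual a \<Rightarrow> inv\<^bsub>G\<^esub> (dg X a) | _ \<Rightarrow> \<one>\<^bsub>G\<^esub>))"

definition dimo :: "'g obj \<Rightarrow> nat" where "dimo X = card (bas X)"

definition hom :: "'g obj \<Rightarrow> 'g obj \<Rightarrow> mat set" where
  "hom X Y = {m. \<forall>t s. m t s \<noteq> 0 \<longrightarrow> t \<in> bas Y \<and> s \<in> bas X \<and> dg Y t = dg X s}"

definition idm :: "'g obj \<Rightarrow> mat" where
  "idm X = (\<lambda>t s. if s \<in> bas X \<and> t = s then 1 else 0)"

text \<open>Composition m o n, where n : X -> Y and m : Y -> Z.\<close>
definition comp :: "'g obj \<Rightarrow> mat \<Rightarrow> mat \<Rightarrow> mat" where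
  "comp Y m n = (\<lambda>t s. \<Sum>k\<in>bas Y. m t k * n k s)"

definition tensm :: "mat \<Rightarrow> mat \<Rightarrow> mat" where
  "tensm f g = (\<lambda>t s. case (t, s) of (Pair t1 t2, Pair s1 s2) \<Rightarrow> f t1 s1 * g t2 s2 | _ \<Rightarrow> 0)"

text \<open>Associativity constraint Phi : (X (x) Y) (x) Z -> X (x) (Y (x) Z), the action of phi.\<close>
definition assoc :: "('g,'b) monoid_scheme \<Rightarrow> ('g \<Rightarrow> 'g \<Rightarrow> 'g \<Rightarrow> complex)
    \<Rightarrow> 'g obj \<Rightarrow> 'g obj \<Rightarrow> 'g obj \<Rightarrow> mat" where
  "assoc G \<omega> X Y Z = (\<lambda>t s. case (t, s) of
     (Pair a (Pair b c), Pair (Pair a' b') c') \<Rightarrow>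
        if a = a' \<and> b = b' \<and> c = c' \<and> a \<in> bas X \<and> b \<in> bas Y \<and> c \<in> bas Z
        then \<omega> (dg X a) (dg Y b) (dg Z c) else 0
   | _ \<Rightarrow> 0)"

definition assoc_inv :: "('g,'b) monoid_scheme \<Rightarrow> ('g \<Rightarrow> 'g \<Rightarrow> 'g \<Rightarrow> complex)
    \<Rightarrow> 'g obj \<Rightarrow> 'g obj \<Rightarrow> 'g obj \<Rightarrow> mat" where
  "assoc_inv G \<omega> X Y Z = (\<lambda>t s. case (t, s) of
     (Pair (Pair a b) c, Pair a' (Pair b' c')) \<Rightarrow>
        if a = a' \<and> b = b' \<and> c = c' \<and> a \<in> bas X \<and> b \<in> bas Y \<and> c \<in> bas Z
        then inverse (\<omega> (dg X a) (dg Y b) (dg Z c)) else 0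
   | _ \<Rightarrow> 0)"

text \<open>Unit constraints (canonical, since phi is normalized).\<close>
definition lunit :: "'g obj \<Rightarrow> mat" where
  "lunit X = (\<lambda>t s. if t \<in> bas X \<and> s = Pair Unit t then 1 else 0)"
definition lunit_inv :: "'g obj \<Rightarrow> mat" where
  "lunit_inv X = (\<lambda>t s. if s \<in> bas X \<and> t = Pair Unit s then 1 else 0)"
definition runit :: "'g obj \<Rightarrow> mat" where
  "runit X = (\<lambda>t s. if t \<in> bas X \<and> s = Pair t Unit then 1 else 0)"
definition runit_inv :: "'g obj \<Rightarrow> mat" where
  "runit_inv X = (\<lambda>t s. if s \<in> bas X \<and> t = Pair s Unit then 1 else 0)"

text \<open>beta = sum_a omega(a,a^-1,a)^-1 e(a); alpha = 1.\<close>
definition betaH :: "('g,'b) monoid_scheme \<Rightarrow> ('g \<Rightarrow> 'g \<Rightarrow> 'g \<Rightarrow> complex) \<Rightarrow> 'g \<Rightarrow> complex" where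
  "betaH G \<omega> a = inverse (\<omega> a (inv\<^bsub>G\<^esub> a) a)"

text \<open>ev : X^v (x) X -> I,  ev(f (x) w) = f(alpha w) with alpha = 1.\<close>
definition ev :: "'g obj \<Rightarrow> mat" where
  "ev X = (\<lambda>t s. case s of Pair (Dual i) j \<Rightarrow>
      if t = Unit \<and> i = j \<and> i \<in> bas X then 1 else 0 | _ \<Rightarrow> 0)"

text \<open>db : I -> X (x) X^v,  db(1) = sum_i beta w_i (x) w^i.\<close>
definition db :: "('g,'b) monoid_scheme \<Rightarrow> ('g \<Rightarrow> 'g \<Rightarrow> 'g \<Rightarrow> complex) \<Rightarrow> 'g obj \<Rightarrow> mat" where
  "db G \<omega> X = (\<lambda>t s. case t of Pair i (Dual j) \<Rightarrow>
      if s = Unit \<and> i = j \<and> i \<in> bas X then betaH G \<omega> (dg X i) else 0 | _ \<Rightarrow> 0)"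

definition dualm :: "('g,'b) monoid_scheme \<Rightarrow> ('g \<Rightarrow> 'g \<Rightarrow> 'g \<Rightarrow> complex)
    \<Rightarrow> 'g obj \<Rightarrow> 'g obj \<Rightarrow> mat \<Rightarrow> mat" where
  "dualm G \<omega> X Y g =
    (let Yd = dualo G Y; Xd = dualo G X; I = unito G in
     comp (tens G I Xd) (lunit Xd)
      (comp (tens G (tens G Yd Y) Xd) (tensm (ev Y) (idm Xd))
       (comp (tens G Yd (tens G Y Xd)) (assoc_inv G \<omega> Yd Y Xd)
        (comp (tens G Yd (tens G X Xd)) (tensm (idm Yd) (tensm g (idm Xd)))
         (comp (tens G Yd I) (tensm (idm Yd) (db G \<omega> X)) (runit_inv Yd))))))"

text \<open>Candidate natural isomorphisms Id -> (-)^vv: w_i |-> c(deg w_i) w^ii.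
  (By naturality every natural isomorphism Id -> (-)^vv has this form.)\<close>
definition jc :: "('g \<Rightarrow> complex) \<Rightarrow> 'g obj \<Rightarrow> mat" where
  "jc c X = (\<lambda>t s. if s \<in> bas X \<and> t = Dual (Dual s) then c (dg X s) else 0)"

definition piv_ok :: "('g,'b) monoid_scheme \<Rightarrow> ('g \<Rightarrow> 'g \<Rightarrow> 'g \<Rightarrow> complex) \<Rightarrow> ('g \<Rightarrow> complex) \<Rightarrow> bool" where
  "piv_ok G \<omega> c \<longleftrightarrow> (\<forall>g\<in>carrier G. c g \<noteq> 0) \<and> (\<forall>g. g \<notin> carrier G \<longrightarrow> c g = 0) \<and>
     (\<forall>X::'g obj. finite (bas X) \<and> dg X ` bas X \<subseteq> carrier G \<longrightarrow>
        comp (tens G (dualo G (dualo G X)) (dualo G X)) (ev (dualo G X))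
          (comp (tens G X (dualo G X)) (tensm (jc c X) (idm (dualo G X))) (db G \<omega> X))
        = (\<lambda>t s. of_nat (dimo X) * idm (unito G) t s))"

text \<open>The pivotal structure j (its scalar function), normalised by
  ev o (j (x) id) o db = dim.\<close>
definition pivc :: "('g,'b) monoid_scheme \<Rightarrow> ('g \<Rightarrow> 'g \<Rightarrow> 'g \<Rightarrow> complex) \<Rightarrow> 'g \<Rightarrow> complex" where
  "pivc G \<omega> = (THE c. piv_ok G \<omega> c)"

definition jW :: "('g,'b) monoid_scheme \<Rightarrow> ('g \<Rightarrow> 'g \<Rightarrow> 'g \<Rightarrow> complex) \<Rightarrow> 'g obj \<Rightarrow> mat" where
  "jW G \<omega> X = jc (pivc G \<omega>) X"

definition jW_inv :: "('g,'b) monoid_scheme \<Rightarrow> ('g \<Rightarrow> 'g \<Rightarrow> 'g \<Rightarrow> complex) \<Rightarrow> 'g obj \<Rightarrow> mat" where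
  "jW_inv G \<omega> X = (\<lambda>t s. if t \<in> bas X \<and> s = Dual (Dual t) then inverse (pivc G \<omega> (dg X t)) else 0)"

definition Amap :: "('g,'b) monoid_scheme \<Rightarrow> ('g \<Rightarrow> 'g \<Rightarrow> 'g \<Rightarrow> complex)
    \<Rightarrow> 'g obj \<Rightarrow> 'g obj \<Rightarrow> mat \<Rightarrow> mat" where
  "Amap G \<omega> V U f =
    (let Vd = dualo G V; I = unito G in
     comp (tens G I U) (lunit U)
      (comp (tens G (tens G Vd V) U) (tensm (ev V) (idm U))
       (comp (tens G Vd (tens G V U)) (assoc_inv G \<omega> Vd V U)
        (comp (tens G Vd I) (tensm (idm Vd) f) (runit_inv Vd)))))"

definition Ainv :: "('g,'b) monoid_scheme \<Rightarrow> ('g \<Rightarrow> 'g \<Rightarrow> 'g \<Rightarrow> complex)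
    \<Rightarrow> 'g obj \<Rightarrow> 'g obj \<Rightarrow> mat \<Rightarrow> mat" where
  "Ainv G \<omega> V U = inv_into (hom (unito G) (tens G V U)) (Amap G \<omega> V U)"

definition Tmap :: "('g,'b) monoid_scheme \<Rightarrow> ('g \<Rightarrow> 'g \<Rightarrow> 'g \<Rightarrow> complex)
    \<Rightarrow> 'g obj \<Rightarrow> 'g obj \<Rightarrow> mat \<Rightarrow> mat" where
  "Tmap G \<omega> V U g = comp (dualo G (dualo G V)) (jW_inv G \<omega> V) (dualm G \<omega> (dualo G V) U g)"

fun tpow :: "('g,'b) monoid_scheme \<Rightarrow> 'g obj \<Rightarrow> nat \<Rightarrow> 'g obj" where
  "tpow G W 0 = unito G"
| "tpow G W (Suc n) = tens G W (tpow G W n)"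

fun phin :: "('g,'b) monoid_scheme \<Rightarrow> ('g \<Rightarrow> 'g \<Rightarrow> 'g \<Rightarrow> complex) \<Rightarrow> 'g obj \<Rightarrow> nat \<Rightarrow> mat" where
  "phin G \<omega> W 0 = (\<lambda>_ _. 0)"
| "phin G \<omega> W (Suc 0) = comp W (runit_inv W) (lunit W)"
| "phin G \<omega> W (Suc (Suc k)) =
     comp (tens G W (tens G (tpow G W k) W)) (tensm (idm W) (phin G \<omega> W (Suc k)))
       (assoc G \<omega> W (tpow G W k) W)"

definition Emap :: "('g,'b) monoid_scheme \<Rightarrow> ('g \<Rightarrow> 'g \<Rightarrow> 'g \<Rightarrow> complex)
    \<Rightarrow> nat \<Rightarrow> 'g obj \<Rightarrow> mat \<Rightarrow> mat" where
  "Emap G \<omega> n W f =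
    (let U = tpow G W (n - 1) in
     comp (tens G U W) (phin G \<omega> W n)
       (Ainv G \<omega> U W (Tmap G \<omega> W U (Amap G \<omega> W U f))))"

definition elem :: "idx \<Rightarrow> mat" where
  "elem b = (\<lambda>t s. if t = b \<and> s = Unit then 1 else 0)"

text \<open>n-th Frobenius-Schur indicator: trace of E_W^(n) on Hom(I, W^(x)n),
  computed in the basis {elem b | b basis vector of W^(x)n of degree 1}.\<close>
definition FS_ind :: "('g,'b) monoid_scheme \<Rightarrow> ('g \<Rightarrow> 'g \<Rightarrow> 'g \<Rightarrow> complex) \<Rightarrow> nat \<Rightarrow> 'g obj \<Rightarrow> complex" where
  "FS_ind G \<omega> n W =
    (\<Sum>b\<in>{b \<in> bas (tpow G W n). dg (tpow G W n) b = \<one>\<^bsub>G\<^esub>}. Emap G \<omega> n W (elem b) b Unit)"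

definition Vx :: "'g \<Rightarrow> 'g obj" where
  "Vx x = ({Leaf 0}, \<lambda>_. x)"

definition normalized_3cocycle :: "('g,'b) monoid_scheme \<Rightarrow> ('g \<Rightarrow> 'g \<Rightarrow> 'g \<Rightarrow> complex) \<Rightarrow> bool" where
  "normalized_3cocycle G \<omega> \<longleftrightarrow>
     (\<forall>a\<in>carrier G. \<forall>b\<in>carrier G. \<forall>c\<in>carrier G. \<omega> a b c \<noteq> 0) \<and>
     (\<forall>a\<in>carrier G. \<forall>b\<in>carrier G. \<forall>c\<in>carrier G. \<forall>d\<in>carrier G.
        \<omega> b c d * \<omega> a (b \<otimes>\<^bsub>G\<^esub> c) d * \<omega> a b c
          = \<omega> (a \<otimes>\<^bsub>G\<^esub> b) c d * \<omega> a b (c \<otimes>\<^bsub>G\<^esub> d)) \<and>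
     (\<forall>a\<in>carrier G. \<forall>b\<in>carrier G.
        \<omega> \<one>\<^bsub>G\<^esub> a b = 1 \<and> \<omega> a \<one>\<^bsub>G\<^esub> b = 1 \<and> \<omega> a b \<one>\<^bsub>G\<^esub> = 1)"

definition cyc :: "('g,'b) monoid_scheme \<Rightarrow> 'g \<Rightarrow> 'g set" where
  "cyc G x = {x [^]\<^bsub>G\<^esub> (k::nat) | k. True}"

definition is_coboundary_on :: "('g,'b) monoid_scheme \<Rightarrow> 'g set \<Rightarrow> ('g \<Rightarrow> 'g \<Rightarrow> 'g \<Rightarrow> complex) \<Rightarrow> bool" where
  "is_coboundary_on G H \<theta> \<longleftrightarrow> (\<exists>\<mu> :: 'g \<Rightarrow> 'g \<Rightarrow> complex.
     (\<forall>a\<in>H. \<forall>b\<in>H. \<mu> a b \<noteq> 0) \<and>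
     (\<forall>a\<in>H. \<forall>b\<in>H. \<forall>c\<in>H.
        \<theta> a b c = \<mu> b c * \<mu> a (b \<otimes>\<^bsub>G\<^esub> c) / (\<mu> (a \<otimes>\<^bsub>G\<^esub> b) c * \<mu> a b)))"

definition res_class_order :: "('g,'b) monoid_scheme \<Rightarrow> ('g \<Rightarrow> 'g \<Rightarrow> 'g \<Rightarrow> complex) \<Rightarrow> 'g \<Rightarrow> nat" where
  "res_class_order G \<omega> x =
     (LEAST k. 0 < k \<and> is_coboundary_on G (cyc G x) (\<lambda>a b c. \<omega> a b c ^ k))"

end

theory Submission
  imports Defs
begin

(* Every object in sight is one-dimensional: Hom(I, V_x^(x)n) is zero unless x^n = 1, and then
   it is spanned by a single vector on which A, T, A^-1 and Phi^(n) act by scalars built from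
   omega.  The pivotal structure is forced to be j(g) = omega(g, g^-1, g) = beta(g)^-1, and with
   x^(n-1) = x^-1 the scalars of A, T and A^-1 collapse to omega(x, x^(n-1), x); Phi^(n)
   contributes the remaining factors omega(x, x^r, x), r < n - 1.

   For the root-of-unity statements put P(theta) = prod_(i < o(x)) theta(x, x^i, x).  The cocycle
   identity makes a |-> prod_i theta(a, x^i, x) multiplicative along <x>, so P(theta)^o(x) = 1;
   and theta is a coboundary on <x> iff P(theta) = 1: a coboundary telescopes to 1, and
   conversely the partial products of P(theta) form a 2-cochain bounding theta.  Since
   nu_o(x)(V_x) = P(omega) and P(omega^k) = P(omega)^k, the order of nu_o(x)(V_x) is the order of
   the restricted class; periodicity of r |-> omega(x, x^r, x) gives nu_(s o(x)) = nu_o(x)^s. *)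

section \<open>Matrices of one-dimensional modules\<close>

lemma bas_unito [simp]: "bas (unito G) = {Unit}"
  by (simp add: unito_def bas_def)

lemma dg_unito [simp]: "dg (unito G) i = \<one>\<^bsub>G\<^esub>"
  by (simp add: unito_def dg_def)

lemma bas_tens: "bas (tens G X Y) = (\<lambda>(a, b). Pair a b) ` (bas X \<times> bas Y)"
  by (auto simp: tens_def bas_def)

lemma dg_tens [simp]: "dg (tens G X Y) (Pair a b) = dg X a \<otimes>\<^bsub>G\<^esub> dg Y b"
  by (simp add: tens_def dg_def)

lemma bas_dualo [simp]: "bas (dualo G X) = Dual ` bas X"
  by (simp add: dualo_def bas_def)

lemma dg_dualo [simp]: "dg (dualo G X) (Dual a) = inv\<^bsub>G\<^esub> (dg X a)"
  by (simp add: dualo_def dg_def)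

lemma bas_Vx: "bas (Vx x) = {Leaf 0}"
  by (simp add: Vx_def bas_def)

lemma dg_Vx: "dg (Vx x) i = x"
  by (simp add: Vx_def dg_def)

definition single_entry :: "idx \<Rightarrow> idx \<Rightarrow> complex \<Rightarrow> mat" where
  "single_entry t s v = (\<lambda>t' s'. if t' = t \<and> s' = s then v else 0)"

lemma single_entry_eq_iff: "single_entry t s v = single_entry t s w \<longleftrightarrow> v = w"
  by (auto simp: single_entry_def fun_eq_iff)

lemma elem_single_entry: "elem b = single_entry b Unit 1"
  by (simp add: elem_def single_entry_def)

lemma hom_one_dim:
  assumes "bas X = {s}" "bas Y = {t}" "m \<in> hom X Y"
  shows "m = single_entry t s (m t s)"
  using assms by (auto simp: hom_def single_entry_def fun_eq_iff)

lemma comp_single_entry: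
  "bas Y = {k} \<Longrightarrow> comp Y (single_entry a k v) (single_entry k c w) = single_entry a c (v * w)"
  by (auto simp: comp_def single_entry_def fun_eq_iff)

lemma tensm_single_entry:
  "tensm (single_entry a b v) (single_entry c d w) = single_entry (Pair a c) (Pair b d) (v * w)"
  by (auto simp: tensm_def single_entry_def fun_eq_iff split: idx.split)

lemma idm_single_entry: "bas X = {k} \<Longrightarrow> idm X = single_entry k k 1"
  by (auto simp: idm_def single_entry_def fun_eq_iff)

lemma lunit_single_entry: "bas X = {k} \<Longrightarrow> lunit X = single_entry k (Pair Unit k) 1"
  by (auto simp: lunit_def single_entry_def fun_eq_iff)

lemma runit_inv_single_entry: "bas X = {k} \<Longrightarrow> runit_inv X = single_entry (Pair k Unit) k 1"
  by (auto simp: runit_inv_def single_entry_def fun_eq_iff)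

lemma ev_single_entry: "bas X = {k} \<Longrightarrow> ev X = single_entry Unit (Pair (Dual k) k) 1"
  by (auto simp: ev_def single_entry_def fun_eq_iff split: idx.split)

lemma db_single_entry:
  "bas X = {k} \<Longrightarrow> db G \<omega> X = single_entry (Pair k (Dual k)) Unit (betaH G \<omega> (dg X k))"
  by (auto simp: db_def single_entry_def fun_eq_iff split: idx.split)

lemma assoc_single_entry:
  "bas X = {a} \<Longrightarrow> bas Y = {b} \<Longrightarrow> bas Z = {c} \<Longrightarrow>
   assoc G \<omega> X Y Z =
     single_entry (Pair a (Pair b c)) (Pair (Pair a b) c) (\<omega> (dg X a) (dg Y b) (dg Z c))"
  by (auto simp: assoc_def single_entry_def fun_eq_iff split: idx.split)

lemma assoc_inv_single_entry:
  "bas X = {a} \<Longrightarrow> bas Y = {b} \<Longrightarrow> bas Z = {c} \<Longrightarrow>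
   assoc_inv G \<omega> X Y Z =
     single_entry (Pair (Pair a b) c) (Pair a (Pair b c)) (inverse (\<omega> (dg X a) (dg Y b) (dg Z c)))"
  by (auto simp: assoc_inv_def single_entry_def fun_eq_iff split: idx.split)

lemma jW_inv_single_entry:
  "bas X = {k} \<Longrightarrow> jW_inv G \<omega> X = single_entry k (Dual (Dual k)) (inverse (pivc G \<omega> (dg X k)))"
  by (auto simp: jW_inv_def single_entry_def fun_eq_iff)

lemmas single_entry_simps = comp_single_entry tensm_single_entry idm_single_entry
  lunit_single_entry runit_inv_single_entry ev_single_entry db_single_entry
  assoc_single_entry assoc_inv_single_entry jW_inv_single_entry bas_tens

lemma Amap_single_entry:
  assumes "bas V = {v}" "bas U = {u}"
  shows "Amap G \<omega> V U (single_entry (Pair v u) Unit c) =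
     single_entry u (Dual v) (c * inverse (\<omega> (inv\<^bsub>G\<^esub> (dg V v)) (dg V v) (dg U u)))"
  using assms by (simp add: Amap_def Let_def single_entry_simps mult.commute)

lemma dualm_single_entry:
  assumes "bas X = {p}" "bas Y = {q}"
  shows "dualm G \<omega> X Y (single_entry q p c) =
     single_entry (Dual p) (Dual q)
       (c * betaH G \<omega> (dg X p) * inverse (\<omega> (inv\<^bsub>G\<^esub> (dg Y q)) (dg Y q) (inv\<^bsub>G\<^esub> (dg X p))))"
  using assms by (simp add: dualm_def Let_def single_entry_simps mult.commute mult.left_commute)

lemma Ainv_single_entry:
  assumes V: "bas V = {v}" and U: "bas U = {u}"
    and deg: "dg V v \<otimes>\<^bsub>G\<^esub> dg U u = \<one>\<^bsub>G\<^esub>"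
    and nz: "\<omega> (inv\<^bsub>G\<^esub> (dg V v)) (dg V v) (dg U u) \<noteq> 0"
  shows "Ainv G \<omega> V U (single_entry u (Dual v) d) =
     single_entry (Pair v u) Unit (d * \<omega> (inv\<^bsub>G\<^esub> (dg V v)) (dg V v) (dg U u))"
proof -
  let ?H = "hom (unito G) (tens G V U)"
  have bas_VU: "bas (tens G V U) = {Pair v u}"
    using V U by (simp add: bas_tens)
  have "inj_on (Amap G \<omega> V U) ?H"
  proof (rule inj_onI)
    fix m m' assume "m \<in> ?H" "m' \<in> ?H" and eq: "Amap G \<omega> V U m = Amap G \<omega> V U m'"
    then have m: "m = single_entry (Pair v u) Unit (m (Pair v u) Unit)"
      and m': "m' = single_entry (Pair v u) Unit (m' (Pair v u) Unit)"
      using hom_one_dim[OF bas_unito bas_VU] by auto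
    with eq have "Amap G \<omega> V U (single_entry (Pair v u) Unit (m (Pair v u) Unit)) =
        Amap G \<omega> V U (single_entry (Pair v u) Unit (m' (Pair v u) Unit))"
      by metis
    with nz have "m (Pair v u) Unit = m' (Pair v u) Unit"
      by (simp add: Amap_single_entry[OF V U] single_entry_eq_iff)
    with m m' show "m = m'"
      by metis
  qed
  moreover have "single_entry (Pair v u) Unit (d * \<omega> (inv\<^bsub>G\<^esub> (dg V v)) (dg V v) (dg U u)) \<in> ?H"
    using bas_VU deg by (auto simp: hom_def single_entry_def)
  ultimately show ?thesis
    unfolding Ainv_def
    by (rule inv_into_f_eq) (use nz in \<open>simp add: Amap_single_entry[OF V U] mult.assoc\<close>)
qed

fun tpow_idx :: "idx \<Rightarrow> nat \<Rightarrow> idx" where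
  "tpow_idx w 0 = Unit"
| "tpow_idx w (Suc k) = Pair w (tpow_idx w k)"

lemma bas_tpow: "bas W = {w} \<Longrightarrow> bas (tpow G W k) = {tpow_idx w k}"
  by (induction k) (simp_all add: bas_tens)

lemma dg_tpow:
  assumes "group G" "dg W w \<in> carrier G"
  shows "dg (tpow G W k) (tpow_idx w k) = dg W w [^]\<^bsub>G\<^esub> k"
  by (induction k) (simp_all add: assms monoid.nat_pow_Suc2[OF group.is_monoid[OF assms(1)]]
      del: nat_pow_Suc)

lemma phin_single_entry:
  assumes "bas W = {w}"
  shows "phin G \<omega> W (Suc k) = single_entry (tpow_idx w (Suc k)) (Pair (tpow_idx w k) w)
            (\<Prod>r<k. \<omega> (dg W w) (dg (tpow G W r) (tpow_idx w r)) (dg W w))"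
  by (induction k) (use assms in \<open>simp_all add: single_entry_simps bas_tpow del: tpow.simps\<close>)

section \<open>The pivotal structure\<close>

lemma if_zero_mult: "(if P then a else 0) * (b :: 'a :: mult_zero) = (if P then a * b else 0)"
  by simp

lemma mult_if_zero: "(b :: 'a :: mult_zero) * (if P then a else 0) = (if P then b * a else 0)"
  by simp

lemma sum_bas_tens:
  assumes "finite (bas X)" "finite (bas Y)"
  shows "(\<Sum>k\<in>bas (tens G X Y). f k) = (\<Sum>a\<in>bas X. \<Sum>b\<in>bas Y. f (Pair a b))"
  using assms by (simp add: bas_tens sum.reindex inj_on_def sum.cartesian_product case_prod_unfold)

lemma sum_Dual: "(\<Sum>b\<in>Dual ` A. f b) = (\<Sum>a\<in>A. f (Dual a))"
  by (simp add: sum.reindex inj_on_def)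

lemma ev_jc_db:
  fixes X :: "'g obj"
  assumes fin: "finite (bas X)"
  shows "comp (tens G (dualo G (dualo G X)) (dualo G X)) (ev (dualo G X))
           (comp (tens G X (dualo G X)) (tensm (jc c X) (idm (dualo G X))) (db G \<omega> X))
       = (\<lambda>t s. if t = Unit \<and> s = Unit then (\<Sum>a\<in>bas X. c (dg X a) * betaH G \<omega> (dg X a)) else 0)"
proof (intro ext)
  fix t s
  have db: "comp (tens G X (dualo G X)) M (db G \<omega> X) k s
      = (if s = Unit then (\<Sum>a\<in>bas X. M k (Pair a (Dual a)) * betaH G \<omega> (dg X a)) else 0)" for M k
    unfolding comp_def using fin
    by (auto simp: sum_bas_tens sum_Dual db_def if_distrib cong: if_cong intro!: sum.cong)
  show "comp (tens G (dualo G (dualo G X)) (dualo G X)) (ev (dualo G X))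
          (comp (tens G X (dualo G X)) (tensm (jc c X) (idm (dualo G X))) (db G \<omega> X)) t s =
       (if t = Unit \<and> s = Unit then (\<Sum>a\<in>bas X. c (dg X a) * betaH G \<omega> (dg X a)) else 0)"
    unfolding comp_def[of "tens G (dualo G (dualo G X)) (dualo G X)"] db using fin
    by (auto simp: sum_bas_tens sum_Dual ev_def tensm_def jc_def idm_def if_zero_mult mult_if_zero
        cong: if_cong)
qed

definition canonical_pivot :: "('g, 'b) monoid_scheme \<Rightarrow> ('g \<Rightarrow> 'g \<Rightarrow> 'g \<Rightarrow> complex) \<Rightarrow> 'g \<Rightarrow> complex"
  where "canonical_pivot G \<omega> g = (if g \<in> carrier G then \<omega> g (inv\<^bsub>G\<^esub> g) g else 0)"

lemma piv_ok_canonical_pivot: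
  fixes G :: "('g, 'b) monoid_scheme"
  assumes nz: "\<forall>g\<in>carrier G. \<omega> g (inv\<^bsub>G\<^esub> g) g \<noteq> 0"
  shows "piv_ok G \<omega> (canonical_pivot G \<omega>)"
  unfolding piv_ok_def
proof (intro conjI allI impI)
  fix X :: "'g obj"
  assume X: "finite (bas X) \<and> dg X ` bas X \<subseteq> carrier G"
  then have "\<forall>a\<in>bas X. canonical_pivot G \<omega> (dg X a) * betaH G \<omega> (dg X a) = 1"
    using nz by (auto simp: canonical_pivot_def betaH_def)
  with X show "comp (tens G (dualo G (dualo G X)) (dualo G X)) (ev (dualo G X))
      (comp (tens G X (dualo G X)) (tensm (jc (canonical_pivot G \<omega>) X) (idm (dualo G X)))
        (db G \<omega> X))
    = (\<lambda>t s. of_nat (dimo X) * idm (unito G) t s)"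
    unfolding ev_jc_db[OF conjunct1[OF X]] by (simp add: dimo_def idm_def fun_eq_iff)
qed (use nz in \<open>auto simp: canonical_pivot_def\<close>)

lemma piv_ok_unique:
  assumes "piv_ok G \<omega> c"
  shows "c = canonical_pivot G \<omega>"
proof
  fix g
  show "c g = canonical_pivot G \<omega> g"
  proof (cases "g \<in> carrier G")
    case True
    then have Vx: "finite (bas (Vx g)) \<and> dg (Vx g) ` bas (Vx g) \<subseteq> carrier G"
      by (simp add: bas_Vx dg_Vx)
    note trace = assms[unfolded piv_ok_def, THEN conjunct2, THEN conjunct2, rule_format, OF Vx]
    have "c g * betaH G \<omega> g = 1"
      using fun_cong[OF fun_cong[OF trace], of Unit Unit]
      unfolding ev_jc_db[OF conjunct1[OF Vx]] by (simp add: bas_Vx dg_Vx dimo_def idm_def)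
    then show ?thesis
      using True by (auto simp: canonical_pivot_def betaH_def field_simps)
  qed (use assms in \<open>simp add: piv_ok_def canonical_pivot_def\<close>)
qed

lemma pivc_eq:
  assumes "\<forall>g\<in>carrier G. \<omega> g (inv\<^bsub>G\<^esub> g) g \<noteq> 0"
  shows "pivc G \<omega> = canonical_pivot G \<omega>"
  unfolding pivc_def
  using piv_ok_canonical_pivot[where G=G and \<omega>=\<omega>, OF assms] piv_ok_unique by blast

lemma cocycle_nonzero:
  "normalized_3cocycle G \<omega> \<Longrightarrow> a \<in> carrier G \<Longrightarrow> b \<in> carrier G \<Longrightarrow> c \<in> carrier G \<Longrightarrow>
   \<omega> a b c \<noteq> 0"
  by (simp add: normalized_3cocycle_def)

lemma cocycle_identity:
  "normalized_3cocycle G \<omega> \<Longrightarrow>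
   a \<in> carrier G \<Longrightarrow> b \<in> carrier G \<Longrightarrow> c \<in> carrier G \<Longrightarrow> d \<in> carrier G \<Longrightarrow>
   \<omega> b c d * \<omega> a (b \<otimes>\<^bsub>G\<^esub> c) d * \<omega> a b c = \<omega> (a \<otimes>\<^bsub>G\<^esub> b) c d * \<omega> a b (c \<otimes>\<^bsub>G\<^esub> d)"
  by (simp add: normalized_3cocycle_def)

lemma cocycle_unit:
  "normalized_3cocycle G \<omega> \<Longrightarrow> a \<in> carrier G \<Longrightarrow> b \<in> carrier G \<Longrightarrow>
   \<omega> \<one>\<^bsub>G\<^esub> a b = 1 \<and> \<omega> a \<one>\<^bsub>G\<^esub> b = 1 \<and> \<omega> a b \<one>\<^bsub>G\<^esub> = 1"
  by (simp add: normalized_3cocycle_def)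

lemma cocycle_power: "normalized_3cocycle G \<omega> \<Longrightarrow> normalized_3cocycle G (\<lambda>a b c. \<omega> a b c ^ k)"
  by (simp add: normalized_3cocycle_def flip: power_mult_distrib)

context group
begin

lemma cocycle_inv_pair:
  assumes "normalized_3cocycle G \<omega>" "g \<in> carrier G"
  shows "\<omega> (inv g) g (inv g) * \<omega> g (inv g) g = 1"
proof -
  have "inv g \<in> carrier G" using assms(2) by simp
  from cocycle_identity[OF assms(1) assms(2) this assms(2) this] show ?thesis
    using cocycle_unit[OF assms(1)] assms(2) by simp
qed

end

section \<open>Frobenius-Schur indicators of one-dimensional modules\<close>

context group
begin

lemma Emap_one_dim:
  assumes coc: "normalized_3cocycle G \<omega>"
    and W: "bas W = {w}" and g: "dg W w = g" "g \<in> carrier G" and root: "g [^] Suc m = \<one>"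
  shows "Emap G \<omega> (Suc m) W (elem (tpow_idx w (Suc m))) =
    single_entry (tpow_idx w (Suc m)) Unit (\<Prod>r<Suc m. \<omega> g (g [^] r) g)"
proof -
  let ?U = "tpow G W m" and ?u = "tpow_idx w m"
  have g_inv: "inv g \<in> carrier G" using g by simp
  have U: "bas ?U = {?u}" using bas_tpow[OF W] .
  have dg_pow: "dg (tpow G W r) (tpow_idx w r) = g [^] r" for r
    using dg_tpow[OF is_group] g by simp
  have "g [^] m \<otimes> g = \<one>" using root by simp
  then have dg_U: "dg ?U ?u = inv g"
    using inv_equality[of "g [^] m" g] g dg_pow by simp
  have nz: "\<forall>h\<in>carrier G. \<omega> h (inv h) h \<noteq> 0"
    using cocycle_nonzero[OF coc] by simp
  have inv_pair: "\<omega> (inv g) g (inv g) = inverse (\<omega> g (inv g) g)"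
    using cocycle_inv_pair[OF coc g(2)] cocycle_nonzero[OF coc g(2) g_inv g(2)]
    by (simp add: field_simps)
  have A: "Amap G \<omega> W ?U (elem (tpow_idx w (Suc m))) = single_entry ?u (Dual w) (\<omega> g (inv g) g)"
    using Amap_single_entry[OF W U, where G=G and \<omega>=\<omega>]
    by (simp add: elem_single_entry g dg_U inv_pair)
  text \<open>The pivotal structure makes \<open>T\<close> exactly undo the scalar of \<open>A\<close>.\<close>
  have TA: "Tmap G \<omega> W ?U (single_entry ?u (Dual w) (\<omega> g (inv g) g)) = single_entry w (Dual ?u) 1"
    using W g g_inv nz cocycle_nonzero[OF coc g(2) g_inv g(2)]
    by (simp add: Tmap_def dualm_single_entry[OF _ U] single_entry_simps
        pivc_eq[where G=G and \<omega>=\<omega>, OF nz] canonical_pivot_def betaH_def dg_U inv_pair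
        single_entry_eq_iff field_simps)
  have ATA: "Ainv G \<omega> ?U W (single_entry w (Dual ?u) 1) =
      single_entry (Pair ?u w) Unit (\<omega> g (inv g) g)"
    using Ainv_single_entry[OF U W, where G=G and \<omega>=\<omega>] g g_inv
      cocycle_nonzero[OF coc g(2) g_inv g(2)]
    by (simp add: dg_U)
  have "g [^] m = inv g" using dg_U dg_pow by simp
  then show ?thesis
    unfolding Emap_def Let_def diff_Suc_1 A TA ATA
    using W U by (simp add: phin_single_entry[OF W] single_entry_simps g dg_pow del: tpow.simps)
qed

lemma FS_ind_one_dim:
  assumes coc: "normalized_3cocycle G \<omega>"
    and W: "bas W = {w}" and g: "dg W w = g" "g \<in> carrier G" and n: "0 < n"
  shows "FS_ind G \<omega> n W = (if g [^] n = \<one> then \<Prod>r<n. \<omega> g (g [^] r) g else 0)"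
proof -
  obtain m where m: "n = Suc m" using n by (cases n) auto
  have "{b \<in> bas (tpow G W n). dg (tpow G W n) b = \<one>} =
      (if g [^] n = \<one> then {tpow_idx w n} else {})"
    using bas_tpow[OF W] dg_tpow[OF is_group, of W w] g by auto
  then show ?thesis
    unfolding FS_ind_def m using Emap_one_dim[OF coc W g]
    by (simp add: single_entry_def)
qed

lemma FS_ind_Vx:
  assumes "normalized_3cocycle G \<omega>" "x \<in> carrier G" "0 < n"
  shows "FS_ind G \<omega> n (Vx x) =
    (if x [^] n = \<one> then \<Prod>r<n. \<omega> x (x [^] r) x else 0)"
  using FS_ind_one_dim[OF assms(1) bas_Vx dg_Vx assms(2,3)] .

end

section \<open>Cyclic subgroups\<close>

lemma prod_lessThan_mult_periodic:
  fixes f :: "nat \<Rightarrow> 'a :: comm_monoid_mult"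
  assumes periodic: "\<And>i. f (i + N) = f i"
  shows "(\<Prod>i<s * N. f i) = (\<Prod>i<N. f i) ^ s"
proof -
  have shift: "f (i + m * N) = f i" for i m
    by (induction m) (simp, metis periodic add.assoc add.commute mult_Suc)
  have "(\<Prod>i<s * N. f i) = (\<Prod>m<s. \<Prod>i\<in>{m * N..<m * N + N}. f i)"
    by (rule prod.nat_group[symmetric])
  also have "\<dots> = (\<Prod>m<s. \<Prod>i<N. f (i + m * N))"
    by (simp add: prod.shift_bounds_nat_ivl[of f 0 "m * N" N for m, simplified] atLeast0LessThan
        add.commute)
  also have "\<dots> = (\<Prod>i<N. f i) ^ s"
    by (simp add: shift)
  finally show ?thesis .
qed

locale finite_group_element = group G for G :: "('g, 'b) monoid_scheme" (structure) +
  fixes x :: 'g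
  assumes finite_carrier: "finite (carrier G)" and x_closed [simp]: "x \<in> carrier G"
begin

lemma ord_pos: "0 < ord x"
  using ord_ge_1[OF finite_carrier x_closed] by simp

lemma pow_mod_ord: "x [^] (n mod ord x) = x [^] (n :: nat)"
proof -
  have "x [^] n = x [^] (ord x * (n div ord x)) \<otimes> x [^] (n mod ord x)"
    by (simp add: nat_pow_mult)
  also have "x [^] (ord x * (n div ord x)) = \<one>"
    by (simp add: pow_eq_id)
  finally show ?thesis
    by simp
qed

lemma x_pow_comm: "x \<otimes> x [^] (n :: nat) = x [^] n \<otimes> x"
  using nat_pow_Suc2[OF x_closed, of n] by simp

lemma pow_eq_pow_iff: "x [^] (m :: nat) = x [^] (n :: nat) \<longleftrightarrow> m mod ord x = n mod ord x"
proof
  assume "x [^] m = x [^] n"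
  then have "x [^] (m mod ord x) = x [^] (n mod ord x)"
    by (simp add: pow_mod_ord)
  moreover have "m mod ord x \<in> {0..ord x - 1}" "n mod ord x \<in> {0..ord x - 1}"
    using ord_pos by (simp_all add: le_diff_conv2 Suc_le_eq)
  ultimately show "m mod ord x = n mod ord x"
    using ord_inj[OF x_closed] by (auto dest: inj_onD)
qed (metis pow_mod_ord)

definition cyc_log :: "'g \<Rightarrow> nat" where
  "cyc_log b = (LEAST k. x [^] k = b)"

lemma cyc_log_pow: "cyc_log (x [^] (n :: nat)) = n mod ord x"
  unfolding cyc_log_def
proof (rule Least_equality)
  fix k :: nat
  assume "x [^] k = x [^] n"
  then show "n mod ord x \<le> k"
    by (metis pow_eq_pow_iff mod_less_eq_dividend)
qed (rule pow_mod_ord)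

lemma cyc_mult_closed: "a \<in> cyc G x \<Longrightarrow> b \<in> cyc G x \<Longrightarrow> a \<otimes> b \<in> cyc G x"
  by (auto simp: cyc_def nat_pow_mult)

lemma cyc_subset_carrier: "cyc G x \<subseteq> carrier G"
  by (auto simp: cyc_def)

lemma prod_pow_rotate: "(\<Prod>i<ord x. f (x [^] Suc i)) = (\<Prod>i<ord x. f (x [^] i))"
proof -
  obtain M where M: "ord x = Suc M"
    using ord_pos gr0_conv_Suc by auto
  then have "x [^] Suc M = \<one>"
    using pow_ord_eq_1[OF x_closed] by simp
  then have "(\<Prod>i<Suc M. f (x [^] Suc i)) = f (x [^] (0 :: nat)) * (\<Prod>i<M. f (x [^] Suc i))"
    by (simp only: prod.lessThan_Suc mult.commute) simp
  also have "\<dots> = (\<Prod>i<Suc M. f (x [^] i))"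
    by (rule prod.lessThan_Suc_shift[symmetric])
  finally show ?thesis
    unfolding M .
qed

definition cyc_prod :: "('g \<Rightarrow> 'g \<Rightarrow> 'g \<Rightarrow> complex) \<Rightarrow> 'g \<Rightarrow> complex" where
  "cyc_prod \<theta> a = (\<Prod>i<ord x. \<theta> a (x [^] i) x)"

lemma cyc_prod_power: "cyc_prod (\<lambda>a b c. \<theta> a b c ^ k) a = cyc_prod \<theta> a ^ k"
  by (simp add: cyc_prod_def prod_power_distrib)

lemma cyc_prod_one: "normalized_3cocycle G \<theta> \<Longrightarrow> cyc_prod \<theta> \<one> = 1"
  by (simp add: cyc_prod_def cocycle_unit)

lemma cyc_prod_mult:
  assumes coc: "normalized_3cocycle G \<theta>" and a: "a \<in> carrier G"
  shows "cyc_prod \<theta> (a \<otimes> x) = cyc_prod \<theta> a * cyc_prod \<theta> x"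
proof -
  let ?D = "\<Prod>i<ord x. \<theta> a x (x [^] i)"
  have "\<theta> x (x [^] i) x * \<theta> a (x [^] Suc i) x * \<theta> a x (x [^] i) =
      \<theta> (a \<otimes> x) (x [^] i) x * \<theta> a x (x [^] Suc i)" for i :: nat
    using cocycle_identity[OF coc a x_closed nat_pow_closed[OF x_closed] x_closed]
    by (simp add: x_pow_comm)
  then have "cyc_prod \<theta> x * (\<Prod>i<ord x. \<theta> a (x [^] Suc i) x) * ?D =
      cyc_prod \<theta> (a \<otimes> x) * (\<Prod>i<ord x. \<theta> a x (x [^] Suc i))"
    by (simp add: cyc_prod_def flip: prod.distrib)
  then have "cyc_prod \<theta> x * cyc_prod \<theta> a * ?D = cyc_prod \<theta> (a \<otimes> x) * ?D"
    unfolding cyc_prod_def prod_pow_rotate[of "\<lambda>b. \<theta> a b x"] prod_pow_rotate[of "\<lambda>b. \<theta> a x b"] .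
  moreover have "?D \<noteq> 0"
    using cocycle_nonzero[OF coc] a by (simp add: prod_zero_iff)
  ultimately show ?thesis
    by (simp add: mult.commute)
qed

lemma cyc_prod_pow: "normalized_3cocycle G \<theta> \<Longrightarrow> cyc_prod \<theta> (x [^] (m :: nat)) = cyc_prod \<theta> x ^ m"
  by (induction m) (simp_all add: cyc_prod_one cyc_prod_mult)

lemma cyc_prod_root_of_unity: "normalized_3cocycle G \<theta> \<Longrightarrow> cyc_prod \<theta> x ^ ord x = 1"
  using cyc_prod_pow[of \<theta> "ord x"] by (simp add: cyc_prod_one)

lemma cyc_prod_cyc:
  "normalized_3cocycle G \<theta> \<Longrightarrow> cyc_prod \<theta> x = 1 \<Longrightarrow> a \<in> cyc G x \<Longrightarrow> cyc_prod \<theta> a = 1"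
  by (auto simp: cyc_def cyc_prod_pow)

text \<open>For \<open>0 \<le> k < ord x\<close>, \<open>cyc_cochain \<theta> a (x [^] k)\<close> is the \<open>k\<close>-th partial product
  of \<open>cyc_prod \<theta> a\<close>; these close up to a 2-cochain bounding \<open>\<theta>\<close> exactly when the full
  product is \<open>1\<close>.\<close>

definition cyc_cochain :: "('g \<Rightarrow> 'g \<Rightarrow> 'g \<Rightarrow> complex) \<Rightarrow> 'g \<Rightarrow> 'g \<Rightarrow> complex" where
  "cyc_cochain \<theta> a b = (\<Prod>i<cyc_log b. \<theta> a (x [^] i) x)"

lemma cyc_cochain_pow: "cyc_cochain \<theta> a (x [^] (n :: nat)) = (\<Prod>i<n mod ord x. \<theta> a (x [^] i) x)"
  by (simp add: cyc_cochain_def cyc_log_pow)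

lemma cyc_cochain_one: "cyc_cochain \<theta> a \<one> = 1"
  using cyc_cochain_pow[of \<theta> a 0] by simp

lemma cyc_cochain_nonzero:
  "normalized_3cocycle G \<theta> \<Longrightarrow> a \<in> carrier G \<Longrightarrow> cyc_cochain \<theta> a b \<noteq> 0"
  by (simp add: cyc_cochain_def prod_zero_iff cocycle_nonzero)

lemma cyc_cochain_step:
  assumes "cyc_prod \<theta> a = 1" and "c \<in> cyc G x"
  shows "\<theta> a c x * cyc_cochain \<theta> a c = cyc_cochain \<theta> a (c \<otimes> x)"
proof -
  obtain n :: nat where c: "c = x [^] n"
    using assms(2) by (auto simp: cyc_def)
  have cx: "c \<otimes> x = x [^] Suc n"
    by (simp add: c)
  have "\<theta> a c x * cyc_cochain \<theta> a c = (\<Prod>i<Suc (n mod ord x). \<theta> a (x [^] i) x)"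
    by (simp add: c cyc_cochain_pow pow_mod_ord mult.commute)
  also have "\<dots> = cyc_cochain \<theta> a (c \<otimes> x)"
    unfolding cx cyc_cochain_pow
  proof (cases "Suc (n mod ord x) = ord x")
    case True
    then show "(\<Prod>i<Suc (n mod ord x). \<theta> a (x [^] i) x) = (\<Prod>i<Suc n mod ord x. \<theta> a (x [^] i) x)"
      using assms(1) by (simp add: mod_Suc cyc_prod_def del: prod.lessThan_Suc)
  qed (simp add: mod_Suc)
  finally show ?thesis .
qed

lemma cyc_cochain_coboundary:
  assumes coc: "normalized_3cocycle G \<theta>" and cyc_prod_x: "cyc_prod \<theta> x = 1"
    and a: "a \<in> cyc G x" and b: "b \<in> cyc G x"
  shows "\<theta> a b (x [^] k) * cyc_cochain \<theta> (a \<otimes> b) (x [^] k) * cyc_cochain \<theta> a b =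
    cyc_cochain \<theta> b (x [^] k) * cyc_cochain \<theta> a (b \<otimes> x [^] (k :: nat))"
proof (induction k)
  case 0
  have "a \<in> carrier G" "b \<in> carrier G"
    using a b cyc_subset_carrier by auto
  then show ?case
    by (simp add: cyc_cochain_one cocycle_unit[OF coc])
next
  case (Suc k)
  let ?\<mu> = "cyc_cochain \<theta>" and ?c = "x [^] k"
  have cyc: "?c \<in> cyc G x" "a \<otimes> b \<in> cyc G x" "b \<otimes> ?c \<in> cyc G x"
    using a b by (auto simp: cyc_def nat_pow_mult)
  then have carrier: "a \<in> carrier G" "b \<in> carrier G" "?c \<in> carrier G"
    using a b cyc_subset_carrier by auto
  have step: "\<theta> d c x * ?\<mu> d c = ?\<mu> d (c \<otimes> x)" if "d \<in> cyc G x" "c \<in> cyc G x" for c d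
    using cyc_cochain_step[OF cyc_prod_cyc[OF coc cyc_prod_x that(1)] that(2)] .
  have "\<theta> a b (?c \<otimes> x) * ?\<mu> (a \<otimes> b) (?c \<otimes> x) * ?\<mu> a b =
      (\<theta> (a \<otimes> b) ?c x * \<theta> a b (?c \<otimes> x)) * ?\<mu> (a \<otimes> b) ?c * ?\<mu> a b"
    by (simp flip: step[OF cyc(2,1)])
  also have "\<dots> = \<theta> b ?c x * \<theta> a (b \<otimes> ?c) x * (\<theta> a b ?c * ?\<mu> (a \<otimes> b) ?c * ?\<mu> a b)"
    using cocycle_identity[OF coc carrier x_closed] by (simp add: ac_simps)
  also have "\<dots> = (\<theta> b ?c x * ?\<mu> b ?c) * (\<theta> a (b \<otimes> ?c) x * ?\<mu> a (b \<otimes> ?c))"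
    by (simp only: Suc.IH) (simp add: ac_simps)
  also have "\<dots> = ?\<mu> b (?c \<otimes> x) * ?\<mu> a (b \<otimes> (?c \<otimes> x))"
    using step[OF b cyc(1)] step[OF a cyc(3)] carrier by (simp add: m_assoc)
  finally show ?case
    by simp
qed

lemma coboundary_if_cyc_prod_eq_1:
  assumes coc: "normalized_3cocycle G \<theta>" and cyc_prod_x: "cyc_prod \<theta> x = 1"
  shows "is_coboundary_on G (cyc G x) \<theta>"
  unfolding is_coboundary_on_def
proof (intro exI[of _ "cyc_cochain \<theta>"] conjI ballI)
  fix a b assume "a \<in> cyc G x"
  then show "cyc_cochain \<theta> a b \<noteq> 0"
    using cyc_cochain_nonzero[OF coc] cyc_subset_carrier by auto
next
  fix a b c assume a: "a \<in> cyc G x" and b: "b \<in> cyc G x" and "c \<in> cyc G x"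
  then obtain k :: nat where c: "c = x [^] k"
    by (auto simp: cyc_def)
  have "a \<otimes> b \<in> carrier G" "a \<in> carrier G"
    using a b cyc_mult_closed cyc_subset_carrier by auto
  then have "cyc_cochain \<theta> (a \<otimes> b) c \<noteq> 0" "cyc_cochain \<theta> a b \<noteq> 0"
    using cyc_cochain_nonzero[OF coc] by auto
  then show "\<theta> a b c = cyc_cochain \<theta> b c * cyc_cochain \<theta> a (b \<otimes> c) /
      (cyc_cochain \<theta> (a \<otimes> b) c * cyc_cochain \<theta> a b)"
    using cyc_cochain_coboundary[OF coc cyc_prod_x a b, of k] by (simp add: c field_simps)
qed

lemma cyc_prod_eq_1_if_coboundary:
  assumes "is_coboundary_on G (cyc G x) \<theta>"
  shows "cyc_prod \<theta> x = 1"
proof -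
  obtain \<mu> where nz: "\<forall>a\<in>cyc G x. \<forall>b\<in>cyc G x. \<mu> a b \<noteq> 0"
    and cob: "\<forall>a\<in>cyc G x. \<forall>b\<in>cyc G x. \<forall>c\<in>cyc G x.
        \<theta> a b c = \<mu> b c * \<mu> a (b \<otimes> c) / (\<mu> (a \<otimes> b) c * \<mu> a b)"
    using assms unfolding is_coboundary_on_def by blast
  have pow_cyc: "x [^] (i :: nat) \<in> cyc G x" for i
    by (auto simp: cyc_def)
  then have x_cyc: "x \<in> cyc G x"
    by (metis nat_pow_eone x_closed)
  let ?num = "\<lambda>i. \<mu> (x [^] i) x * \<mu> x (x [^] Suc i)"
  let ?den = "\<lambda>i. \<mu> (x [^] Suc i) x * \<mu> x (x [^] i)"
  have "cyc_prod \<theta> x = (\<Prod>i<ord x. ?num i) / (\<Prod>i<ord x. ?den i)"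
    using cob pow_cyc x_cyc by (simp add: cyc_prod_def x_pow_comm prod_dividef ac_simps)
  also have "(\<Prod>i<ord x. ?den i) = (\<Prod>i<ord x. ?num i)"
    using prod_pow_rotate[of "\<lambda>b. \<mu> b x"] prod_pow_rotate[of "\<lambda>b. \<mu> x b"]
    by (simp add: prod.distrib mult.commute)
  also have "(\<Prod>i<ord x. ?num i) \<noteq> 0"
    using nz pow_cyc x_cyc cyc_mult_closed by (simp add: prod_zero_iff)
  ultimately show ?thesis
    by simp
qed

lemma coboundary_iff_cyc_prod_eq_1:
  "normalized_3cocycle G \<theta> \<Longrightarrow> is_coboundary_on G (cyc G x) \<theta> \<longleftrightarrow> cyc_prod \<theta> x = 1"
  using coboundary_if_cyc_prod_eq_1 cyc_prod_eq_1_if_coboundary by blast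

lemma res_class_order_eq:
  "normalized_3cocycle G \<omega> \<Longrightarrow> res_class_order G \<omega> x = (LEAST k. 0 < k \<and> cyc_prod \<omega> x ^ k = 1)"
  by (simp add: res_class_order_def coboundary_iff_cyc_prod_eq_1[OF cocycle_power] cyc_prod_power)

lemma res_class_order_minimal:
  assumes "normalized_3cocycle G \<omega>"
  shows "0 < res_class_order G \<omega> x \<and> cyc_prod \<omega> x ^ res_class_order G \<omega> x = 1
    \<and> (\<forall>k. 0 < k \<and> k < res_class_order G \<omega> x \<longrightarrow> cyc_prod \<omega> x ^ k \<noteq> 1)"
proof -
  let ?root = "\<lambda>k. 0 < k \<and> cyc_prod \<omega> x ^ k = 1"
  have "?root (ord x)"
    using ord_pos cyc_prod_root_of_unity[OF assms] by simp
  then have "?root (LEAST k. ?root k)"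
    by (rule LeastI)
  moreover have "\<not> ?root k" if "k < (LEAST k. ?root k)" for k
    using not_less_Least[OF that] .
  ultimately show ?thesis
    unfolding res_class_order_eq[OF assms] by blast
qed

lemma FS_ind_Vx_mult_ord:
  assumes "normalized_3cocycle G \<omega>" "0 < s"
  shows "FS_ind G \<omega> (s * ord x) (Vx x) = cyc_prod \<omega> x ^ s"
proof -
  have "FS_ind G \<omega> (s * ord x) (Vx x) = (\<Prod>r<s * ord x. \<omega> x (x [^] r) x)"
    using FS_ind_Vx[OF assms(1) x_closed] assms(2) ord_pos by (simp add: pow_eq_id)
  also have "\<dots> = cyc_prod \<omega> x ^ s"
    unfolding cyc_prod_def
    by (rule prod_lessThan_mult_periodic) (metis pow_mod_ord mod_add_self2)
  finally show ?thesis .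
qed

lemma FS_ind_Vx_eq:
  assumes "normalized_3cocycle G \<omega>" "0 < n"
  shows "FS_ind G \<omega> n (Vx x) = (if x [^] n = \<one> then \<Prod>r = 1..n - 1. \<omega> x (x [^] r) x else 0)"
proof -
  obtain m where n: "n = Suc m"
    using assms(2) gr0_conv_Suc by auto
  have "(\<Prod>r<n. \<omega> x (x [^] r) x) = (\<Prod>r = 1..n - 1. \<omega> x (x [^] r) x)"
    unfolding n prod.lessThan_Suc_shift
    by (simp add: cocycle_unit[OF assms(1)] prod.atLeast1_atMost_eq del: prod.lessThan_Suc)
  then show ?thesis
    using FS_ind_Vx[OF assms(1) x_closed assms(2)] by simp
qed

end

theorem mainTheorem11:
  fixes G :: "('g, 'b) monoid_scheme"
    and \<omega> :: "'g \<Rightarrow> 'g \<Rightarrow> 'g \<Rightarrow> complex"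
    and x :: 'g
  assumes "group G"
    and "finite (carrier G)"
    and "normalized_3cocycle G \<omega>"
    and "x \<in> carrier G"
  shows "(\<forall>n::nat. 0 < n \<longrightarrow>
            FS_ind G \<omega> n (Vx x) =
              (if x [^]\<^bsub>G\<^esub> n = \<one>\<^bsub>G\<^esub>
               then (\<Prod>r = 1..n - 1. \<omega> x (x [^]\<^bsub>G\<^esub> r) x) else 0))
       \<and> (\<forall>n::nat. 0 < n \<and> \<not> group.ord G x dvd n \<longrightarrow> FS_ind G \<omega> n (Vx x) = 0)
       \<and> (0 < res_class_order G \<omega> x
          \<and> FS_ind G \<omega> (group.ord G x) (Vx x) ^ res_class_order G \<omega> x = 1
          \<and> (\<forall>k. 0 < k \<and> k < res_class_order G \<omega> x \<longrightarrow>
                 FS_ind G \<omega> (group.ord G x) (Vx x) ^ k \<noteq> 1))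
       \<and> (\<forall>s::nat. 0 < s \<longrightarrow>
            FS_ind G \<omega> (s * group.ord G x) (Vx x) = FS_ind G \<omega> (group.ord G x) (Vx x) ^ s)"
proof -
  interpret finite_group_element G x
    using assms by (simp add: finite_group_element_def finite_group_element_axioms_def)
  have "FS_ind G \<omega> (ord x) (Vx x) = cyc_prod \<omega> x"
    using FS_ind_Vx_mult_ord[OF assms(3), of 1] by simp
  then show ?thesis
    using FS_ind_Vx_eq[OF assms(3)] res_class_order_minimal[OF assms(3)]
      FS_ind_Vx_mult_ord[OF assms(3)] by (auto simp: pow_eq_id)
qed

end
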